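(* Let $\phi$ be a formula whose free variables are among $\{x\}$. If $[x:=a](\phi\to\mathsf{K}_x[x:=a]\phi)$ is a theorem of $\mathbf{LEL}$ for every $a\in\mathbf{A}$, then for every sentence $\alpha$, $\mathsf{K}_\phi\alpha\to\mathsf{K}_\phi\mathsf{K}_\phi\alpha$ is a theorem of $\mathbf{LEL}$.
   Context: Fix a nonempty finite set $\mathbf{A}$ of agents, a countable set $\mathbf{X}$ of variables disjoint from $\mathbf{A}$, and a countable set $\mathbf{P}$ of predicate letters. Formulas and free variables: $\phi ::= p_x \mid \top \mid \neg\phi \mid (\phi\wedge\phi) \mid [x:=a]\phi \mid \mathsf{K}_X\alpha$ ($p\in\mathbf{P}$, $x\in\mathbf{X}$, $a\in\mathbf{A}$, $X\subseteq\mathbf{X}$ finite possibly empty, $\alpha$ with no free variables), $FV(p_x)=\{x\}$, $FV(\top)=\emptyset$, $FV(\neg\phi)=FV(\phi)$, $FV(\phi\wedge\psi)=FV(\phi)\cup FV(\psi)$, $FV([x:=a]\phi)=FV(\phi)\setminus\{x\}$, $FV(\mathsf{K}_X\alpha)=X$. Sentences have no free variables. $\bot:=\neg\top$, $\langle x:=a\rangle\phi:=\neg[x:=a]\neg\phi$. $\phi[y/x]$ replaces free occurrences of $x$ by $y$ (including in index sets of $\mathsf{K}_X$); admissible if $x$ has no free occurrence within the scope of any $[y:=b]$. $[\vec{x}:=\vec{a}]\phi$ abbreviates $[x_1:=a_1]\cdots[x_n:=a_n]\phi$ for equal-length strings $\vec x,\vec a$, $\mathsf{K}_{\vec x}:=\mathsf{K}_{\{x_1,\dots,x_n\}}$,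 $\mathsf{K}_x:=\mathsf{K}_{\{x\}}$, $\{\vec a\}=\{a_1,\dots,a_n\}$. $\mathbf{LEL}$: axioms — propositional tautologies; $\mathsf{K}_X(\alpha\to\beta)\to(\mathsf{K}_X\alpha\to\mathsf{K}_X\beta)$; $\mathsf{K}_X\alpha\to\mathsf{K}_Y\alpha$ ($X\subseteq Y$); $[x:=a](\phi\to\psi)\to([x:=a]\phi\to[x:=a]\psi)$; $\langle x:=a\rangle\phi\to[x:=a]\phi$; $\phi\to[x:=a]\phi$ ($x\notin FV(\phi)$); $[y:=a]([x:=a]\phi\to\phi[y/x])$ ($\phi[y/x]$ admissible); $[x:=a][y:=b]\phi\to[y:=b][x:=a]\phi$ ($x\neq y$); $\bigwedge_{a\in\mathbf{A}}[x:=a]\phi\to\phi$; $\mathsf{K}_X\alpha\to\alpha$; $[\vec{x}:=\vec{a}](\neg\mathsf{K}_{\vec{x}}\alpha\to\mathsf{K}_{\vec{x}}[\vec{x}:=\vec{a}]\neg\mathsf{K}_{\vec{x}}\alpha)$; $[x:=a]\mathsf{K}_{x}\langle x:=a\rangle\top$; $[x:=a](p_x\to\mathsf{K}_{x}[x:=a]p_x)$; $[\vec{x}:=\vec{a}](\bigwedge_{b\in B}[x:=b]\bot\to\mathsf{K}_{\vec{x}}\bigwedge_{b\in B}[x:=b]\bot)$ with $B=\mathbf{A}\setminus\{\vec a\}$. Rules: modus ponens; from sentence $\alpha$ infer $\mathsf{K}_\emptyset\alpha$; from $\phi$ infer $[x:=a]\phi$. Intensional distributed knowledge: for a formula $\phi$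 with free variables among $\{x\}$ and $A\subseteq\mathbf{A}$, let $\phi!(A):=\bigwedge_{a\in A}\langle x:=a\rangle\phi\wedge\bigwedge_{b\in\mathbf{A}\setminus A}[x:=b]\neg\phi$. For a sentence $\alpha$, $\mathsf{K}_\phi\alpha:=\bigwedge_{\{\vec a\}\subseteq\mathbf{A}}(\phi!(\{\vec a\})\to[\vec{x}:=\vec{a}]\mathsf{K}_{\vec{x}}\alpha)$, where the conjunction ranges over all subsets of $\mathbf{A}$, each listed as a string $\vec a$ of distinct agents and paired with a string $\vec x$ of distinct variables of the same length. *)

theory Defs
  imports Main "HOL-Library.Countable"
begin

(* Formulas of LEL.  'p: predicate letters, 'x: variables, 'a: agents. *)
datatype ('p, 'x, 'a) fm =
    Pred 'p 'x
  | Top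
  | Neg "('p, 'x, 'a) fm"
  | And "('p, 'x, 'a) fm" "('p, 'x, 'a) fm"
  | Assign 'x 'a "('p, 'x, 'a) fm"
  | K "'x set" "('p, 'x, 'a) fm"

fun FV :: "('p, 'x, 'a) fm \<Rightarrow> 'x set" where
  "FV (Pred p x) = {x}"
| "FV Top = {}"
| "FV (Neg f) = FV f"
| "FV (And f g) = FV f \<union> FV g"
| "FV (Assign x a f) = FV f - {x}"
| "FV (K X f) = X"

fun wf :: "('p, 'x, 'a) fm \<Rightarrow> bool" where
  "wf (Pred p x) = True"
| "wf Top = True"
| "wf (Neg f) = wf f"
| "wf (And f g) = (wf f \<and> wf g)"
| "wf (Assign x a f) = wf f"
| "wf (K X f) = (finite X \<and> wf f \<and> FV f = {})"

definition Bot :: "('p, 'x, 'a) fm" where "Bot = Neg Top"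
definition Imp :: "('p, 'x, 'a) fm \<Rightarrow> ('p, 'x, 'a) fm \<Rightarrow> ('p, 'x, 'a) fm"
  where "Imp f g = Neg (And f (Neg g))"
definition Dia :: "'x \<Rightarrow> 'a \<Rightarrow> ('p, 'x, 'a) fm \<Rightarrow> ('p, 'x, 'a) fm"
  where "Dia x a f = Neg (Assign x a (Neg f))"

fun Conj :: "('p, 'x, 'a) fm list \<Rightarrow> ('p, 'x, 'a) fm" where
  "Conj [] = Top"
| "Conj (f # fs) = And f (Conj fs)"

(* [x1:=a1]...[xn:=an] phi ; used only for lists of equal length *)
fun Assigns :: "'x list \<Rightarrow> 'a list \<Rightarrow> ('p, 'x, 'a) fm \<Rightarrow> ('p, 'x, 'a) fm" where
  "Assigns (x # xs) (a # as) f = Assign x a (Assigns xs as f)"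
| "Assigns _ _ f = f"

fun subst :: "'x \<Rightarrow> 'x \<Rightarrow> ('p, 'x, 'a) fm \<Rightarrow> ('p, 'x, 'a) fm" where
  "subst y x (Pred p z) = Pred p (if z = x then y else z)"
| "subst y x Top = Top"
| "subst y x (Neg f) = Neg (subst y x f)"
| "subst y x (And f g) = And (subst y x f) (subst y x g)"
| "subst y x (Assign z a f) = (if z = x then Assign z a f else Assign z a (subst y x f))"
| "subst y x (K X f) = K (if x \<in> X then insert y (X - {x}) else X) f"

fun admissible :: "'x \<Rightarrow> 'x \<Rightarrow> ('p, 'x, 'a) fm \<Rightarrow> bool" where
  "admissible y x (Pred p z) = True"
| "admissible y x Top = True"
| "admissible y x (Neg f) = admissible y x f"
| "admissible y x (And f g) = (admissible y x f \<and> admissible y x g)"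
| "admissible y x (Assign z a f) =
     (if z = x then True else if z = y then x \<notin> FV f else admissible y x f)"
| "admissible y x (K X f) = True"

(* propositional tautologies: true under every valuation of the non-boolean subformulas *)
fun peval :: "(('p, 'x, 'a) fm \<Rightarrow> bool) \<Rightarrow> ('p, 'x, 'a) fm \<Rightarrow> bool" where
  "peval v Top = True"
| "peval v (Neg f) = (\<not> peval v f)"
| "peval v (And f g) = (peval v f \<and> peval v g)"
| "peval v f = v f"

definition tautology :: "('p, 'x, 'a) fm \<Rightarrow> bool" where
  "tautology f \<longleftrightarrow> (\<forall>v. peval v f)"

(* Axiom schemes of LEL.  Big conjunctions over (sub)sets of agents are given by an
   arbitrary enumerating list (all such are propositionally equivalent). *)
inductive axiom :: "('p, 'x, 'a::finite) fm \<Rightarrow> bool" where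
  ax_taut: "tautology f \<Longrightarrow> axiom f"
| ax_KK: "axiom (Imp (K X (Imp a b)) (Imp (K X a) (K X b)))"
| ax_mono: "X \<subseteq> Y \<Longrightarrow> axiom (Imp (K X a) (K Y a))"
| ax_AK: "axiom (Imp (Assign x c (Imp f g)) (Imp (Assign x c f) (Assign x c g)))"
| ax_func: "axiom (Imp (Dia x c f) (Assign x c f))"
| ax_vac: "x \<notin> FV f \<Longrightarrow> axiom (Imp f (Assign x c f))"
| ax_subst: "admissible y x f \<Longrightarrow> axiom (Assign y c (Imp (Assign x c f) (subst y x f)))"
| ax_comm: "x \<noteq> y \<Longrightarrow> axiom (Imp (Assign x c (Assign y d f)) (Assign y d (Assign x c f)))"
| ax_all: "set as = UNIV \<Longrightarrow> axiom (Imp (Conj (map (\<lambda>c. Assign x c f) as)) f)"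
| ax_T: "axiom (Imp (K X a) a)"
| ax_5: "length xs = length as \<Longrightarrow>
     axiom (Assigns xs as (Imp (Neg (K (set xs) a))
                               (K (set xs) (Assigns xs as (Neg (K (set xs) a))))))"
| ax_exist: "axiom (Assign x c (K {x} (Dia x c Top)))"
| ax_pred: "axiom (Assign x c (Imp (Pred p x) (K {x} (Assign x c (Pred p x)))))"
| ax_none: "length xs = length as \<Longrightarrow> set bs = UNIV - set as \<Longrightarrow>
     axiom (Assigns xs as (Imp (Conj (map (\<lambda>b. Assign x b Bot) bs))
                               (K (set xs) (Conj (map (\<lambda>b. Assign x b Bot) bs)))))"

inductive LEL :: "('p, 'x, 'a::finite) fm \<Rightarrow> bool" where
  lel_ax: "axiom f \<Longrightarrow> wf f \<Longrightarrow> LEL f"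
| lel_mp: "LEL f \<Longrightarrow> LEL (Imp f g) \<Longrightarrow> LEL g"
| lel_nec: "LEL a \<Longrightarrow> FV a = {} \<Longrightarrow> LEL (K {} a)"
| lel_asg: "LEL f \<Longrightarrow> LEL (Assign x c f)"

(* A choice of how the big conjunction defining K_phi is written out:
   Bs lists all subsets of agents, enum B lists B as a string of distinct agents,
   vars B is a string of distinct variables of the same length. *)
definition valid_choice :: "'a::finite set list \<Rightarrow> ('a set \<Rightarrow> 'a list) \<Rightarrow> ('a set \<Rightarrow> 'x list) \<Rightarrow> bool" where
  "valid_choice Bs enum vars \<longleftrightarrow>
     distinct Bs \<and> set Bs = Pow UNIV \<and>
     (\<forall>B. distinct (enum B) \<and> set (enum B) = B \<and>
          distinct (vars B) \<and> length (vars B) = length (enum B))"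

definition bang :: "('a::finite set \<Rightarrow> 'a list) \<Rightarrow> 'x \<Rightarrow> ('p, 'x, 'a) fm \<Rightarrow> 'a set \<Rightarrow> ('p, 'x, 'a) fm" where
  "bang enum x f B =
     And (Conj (map (\<lambda>c. Dia x c f) (enum B)))
         (Conj (map (\<lambda>b. Assign x b (Neg f)) (enum (UNIV - B))))"

definition Kphi :: "'a::finite set list \<Rightarrow> ('a set \<Rightarrow> 'a list) \<Rightarrow> ('a set \<Rightarrow> 'x list) \<Rightarrow>
    'x \<Rightarrow> ('p, 'x, 'a) fm \<Rightarrow> ('p, 'x, 'a) fm \<Rightarrow> ('p, 'x, 'a) fm" where
  "Kphi Bs enum vars x f a =
     Conj (map (\<lambda>B. Imp (bang enum x f B)
                         (Assigns (vars B) (enum B) (K (set (vars B)) a))) Bs)"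

end

(*
  Assume K_phi alpha and phi!(B), and let [x_B := a_B] enumerate B.  The clause of K_phi alpha for B
  gives beta = [x_B := a_B] K_{x_B} alpha, and positive introspection (derived from the axioms T and 5
  in the scope of the assignments) makes beta known: [x_B := a_B] K_{x_B} beta.  By the hypothesis on
  phi, every conjunct <x := c> phi of phi!(B), c in B, is known as well, after renaming x into the
  variable to which c is assigned.  Finally beta and these conjuncts imply K_phi alpha: a clause for a
  superset B' of B follows from beta because group knowledge grows with the group (once both groups
  are renamed apart to fresh variables), and a clause for B' missing some c in B is vacuous because
  phi!(B') contains [x := c] not phi.  Distributing K_{x_B} over this implication yields
  [x_B := a_B] K_{x_B} K_phi alpha.
*)

theory Submission
  imports Defs
begin

lemma wf_Imp [simp]: "wf (Imp f g) = (wf f \<and> wf g)"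
  by (simp add: Imp_def)

lemma FV_Imp [simp]: "FV (Imp f g) = FV f \<union> FV g"
  by (simp add: Imp_def)

lemma peval_Imp [simp]: "peval v (Imp f g) = (peval v f \<longrightarrow> peval v g)"
  by (simp add: Imp_def)

lemma wf_Dia [simp]: "wf (Dia x c f) = wf f"
  by (simp add: Dia_def)

lemma FV_Dia [simp]: "FV (Dia x c f) = FV f - {x}"
  by (simp add: Dia_def)

lemma peval_Dia [simp]: "peval v (Dia x c f) = (\<not> v (Assign x c (Neg f)))"
  by (simp add: Dia_def)

lemma wf_Conj [simp]: "wf (Conj fs) = (\<forall>f\<in>set fs. wf f)"
  by (induction fs) auto

lemma FV_Conj [simp]: "FV (Conj fs) = (\<Union>f\<in>set fs. FV f)"
  by (induction fs) auto

lemma peval_Conj [simp]: "peval v (Conj fs) = (\<forall>f\<in>set fs. peval v f)"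
  by (induction fs) auto

lemma wf_subst [simp]: "wf (subst y x f) = wf f"
  by (induction f) auto

fun Asgs :: "('x \<times> 'a) list \<Rightarrow> ('p, 'x, 'a) fm \<Rightarrow> ('p, 'x, 'a) fm" where
  "Asgs [] f = f"
| "Asgs (p # ps) f = Assign (fst p) (snd p) (Asgs ps f)"

lemma Asgs_append [simp]: "Asgs (ps @ qs) f = Asgs ps (Asgs qs f)"
  by (induction ps) auto

lemma Assigns_eq_Asgs: "Assigns xs cs f = Asgs (zip xs cs) f"
  by (induction xs cs f rule: Assigns.induct) auto

lemma wf_Asgs [simp]: "wf (Asgs ps f) = wf f"
  by (induction ps) auto

lemma FV_Asgs [simp]: "FV (Asgs ps f) = FV f - fst ` set ps"
  by (induction ps) auto

lemma LEL_wf: "LEL f \<Longrightarrow> wf f"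
  by (induction rule: LEL.induct) auto

lemma LEL_tautology:
  assumes "wf f" and "\<And>v. peval v f"
  shows "LEL f"
  using assms by (intro lel_ax ax_taut) (auto simp: tautology_def)

lemma LEL_consequence:
  assumes "\<And>a. a \<in> set as \<Longrightarrow> LEL a" and "wf c"
    and "\<And>v. \<forall>a\<in>set as. peval v a \<Longrightarrow> peval v c"
  shows "LEL c"
  using assms
proof (induction as arbitrary: c)
  case Nil
  then show ?case
    by (intro LEL_tautology) auto
next
  case (Cons a as)
  have a: "LEL a"
    using Cons.prems(1) by simp
  have "LEL (Imp a c)"
    by (rule Cons.IH) (use Cons.prems LEL_wf[OF a] in auto)
  with a show ?case
    by (rule lel_mp)
qed

lemma LEL_consequence1:
  assumes "LEL a" and "wf c" and "\<And>v. peval v a \<Longrightarrow> peval v c"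
  shows "LEL c"
  by (rule LEL_consequence[of "[a]"]) (use assms in simp_all)

lemma LEL_consequence2:
  assumes "LEL a" and "LEL b" and "wf c" and "\<And>v. peval v a \<Longrightarrow> peval v b \<Longrightarrow> peval v c"
  shows "LEL c"
  by (rule LEL_consequence[of "[a, b]"]) (use assms in auto)

lemma LEL_consequence3:
  assumes "LEL a" and "LEL b" and "LEL d" and "wf c"
    and "\<And>v. peval v a \<Longrightarrow> peval v b \<Longrightarrow> peval v d \<Longrightarrow> peval v c"
  shows "LEL c"
  by (rule LEL_consequence[of "[a, b, d]"]) (use assms in auto)

lemma LEL_imp_Conj:
  assumes "\<And>g. g \<in> set gs \<Longrightarrow> LEL (Imp h g)" and "wf h"
  shows "LEL (Imp h (Conj gs))"
  by (rule LEL_consequence[of "map (Imp h) gs"]) (use assms LEL_wf[OF assms(1)] in auto)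

lemma LEL_imp_trans:
  assumes "LEL (Imp f g)" and "LEL (Imp g h)"
  shows "LEL (Imp f h)"
  using LEL_wf[OF assms(1)] LEL_wf[OF assms(2)] by (intro LEL_consequence2[OF assms]) auto

lemma LEL_Assign_mono2:
  assumes "LEL (Imp f (Imp g h))"
  shows "LEL (Imp (Assign x c f) (Imp (Assign x c g) (Assign x c h)))"
proof -
  have wf: "wf f" "wf g" "wf h"
    using LEL_wf[OF assms] by auto
  have "LEL (Imp (Assign x c (Imp f (Imp g h))) (Imp (Assign x c f) (Assign x c (Imp g h))))"
    using wf by (intro lel_ax ax_AK) auto
  then have "LEL (Imp (Assign x c f) (Assign x c (Imp g h)))"
    by (rule lel_mp[OF lel_asg[OF assms]])
  moreover have "LEL (Imp (Assign x c (Imp g h)) (Imp (Assign x c g) (Assign x c h)))"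
    using wf by (intro lel_ax ax_AK) auto
  ultimately show ?thesis
    by (rule LEL_consequence2) (use wf in auto)
qed

lemma LEL_Asgs_mono2:
  "LEL (Imp f (Imp g h)) \<Longrightarrow> LEL (Imp (Asgs ps f) (Imp (Asgs ps g) (Asgs ps h)))"
  by (induction ps) (auto intro: LEL_Assign_mono2)

lemma LEL_Asgs_nec: "LEL f \<Longrightarrow> LEL (Asgs ps f)"
  by (induction ps) (auto intro: lel_asg)

lemma LEL_Asgs_distrib:
  assumes "LEL (Asgs ps (Imp f g))"
  shows "LEL (Imp (Asgs ps f) (Asgs ps g))"
proof -
  have "LEL (Imp (Imp f g) (Imp f g))"
    using LEL_wf[OF assms] by (intro LEL_tautology) auto
  from lel_mp[OF assms LEL_Asgs_mono2[OF this]] show ?thesis .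
qed

lemma LEL_Asgs_mono: "LEL (Imp f g) \<Longrightarrow> LEL (Imp (Asgs ps f) (Asgs ps g))"
  by (intro LEL_Asgs_distrib LEL_Asgs_nec)

lemma LEL_Asgs_consequence2:
  assumes "LEL (Asgs ps a)" and "LEL (Asgs ps b)" and "wf c"
    and "\<And>v. peval v a \<Longrightarrow> peval v b \<Longrightarrow> peval v c"
  shows "LEL (Asgs ps c)"
proof -
  have "LEL (Imp a (Imp b c))"
    using assms LEL_wf[OF assms(1)] LEL_wf[OF assms(2)] by (intro LEL_tautology) auto
  from lel_mp[OF assms(2) lel_mp[OF assms(1) LEL_Asgs_mono2[OF this]]] show ?thesis .
qed

lemma LEL_Asgs_vacuous: "FV f \<inter> fst ` set ps = {} \<Longrightarrow> wf f \<Longrightarrow> LEL (Imp f (Asgs ps f))"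
proof (induction ps)
  case Nil
  then show ?case
    by (intro LEL_tautology) auto
next
  case (Cons p ps)
  have "LEL (Imp f (Assign (fst p) (snd p) f))"
    using Cons.prems by (intro lel_ax ax_vac) auto
  from LEL_imp_trans[OF this LEL_Asgs_mono[OF Cons.IH, of "[p]", simplified]] show ?case
    using Cons.prems by simp
qed

lemma LEL_Asgs_move_front:
  assumes "fst p \<notin> fst ` set ps" and "wf f"
  shows "LEL (Imp (Asgs (ps @ p # qs) f) (Asgs (p # ps @ qs) f))"
  using assms(1)
proof (induction ps)
  case Nil
  then show ?case
    using assms(2) by (intro LEL_tautology) auto
next
  case (Cons r ps)
  then have IH: "LEL (Imp (Asgs (ps @ p # qs) f) (Asgs (p # ps @ qs) f))"
    by simp
  have "LEL (Imp (Assign (fst r) (snd r) (Assign (fst p) (snd p) (Asgs ps (Asgs qs f))))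
                 (Assign (fst p) (snd p) (Assign (fst r) (snd r) (Asgs ps (Asgs qs f)))))"
    using Cons.prems assms(2) by (intro lel_ax ax_comm) auto
  from LEL_imp_trans[OF LEL_Asgs_mono[OF IH, of "[r]", simplified] this] show ?case
    by simp
qed

lemma LEL_Asgs_perm:
  assumes "distinct (map fst ps)" and "distinct (map fst qs)" and "set ps = set qs" and "wf f"
  shows "LEL (Imp (Asgs ps f) (Asgs qs f))"
  using assms(1-3)
proof (induction qs arbitrary: ps)
  case Nil
  then show ?case
    using assms(4) by (intro LEL_tautology) auto
next
  case (Cons q qs)
  obtain ps1 ps2 where ps: "ps = ps1 @ q # ps2"
    using Cons.prems(3) by (metis list.set_intros(1) split_list)
  have front: "LEL (Imp (Asgs ps f) (Asgs (q # ps1 @ ps2) f))"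
    using Cons.prems(1) assms(4) unfolding ps by (intro LEL_Asgs_move_front) auto
  have "distinct (q # ps1 @ ps2)" and "distinct (q # qs)"
    using Cons.prems(1,2) ps by (auto simp: distinct_map)
  then have "set (ps1 @ ps2) = set qs"
    using Cons.prems(3) ps by auto
  then have "LEL (Imp (Asgs (ps1 @ ps2) f) (Asgs qs f))"
    by (rule Cons.IH[rotated 2]) (use Cons.prems(1,2) ps in auto)
  from LEL_imp_trans[OF front[simplified] LEL_Asgs_mono[OF this, of "[q]", simplified]] show ?case
    by simp
qed

lemma LEL_Asgs_K_subset:
  assumes "distinct (map fst ps)" and "distinct (map fst qs)" and "set ps \<subseteq> set qs"
    and "wf a" and "FV a = {}"
  shows "LEL (Imp (Asgs ps (K (fst ` set ps) a)) (Asgs qs (K (fst ` set qs) a)))"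
proof -
  define rs where "rs = filter (\<lambda>p. p \<notin> set ps) qs"
  have vac: "LEL (Imp (Asgs ps (K (fst ` set ps) a)) (Asgs (rs @ ps) (K (fst ` set ps) a)))"
    using LEL_Asgs_vacuous[of "Asgs ps (K (fst ` set ps) a)" rs] assms by simp
  have grow: "LEL (Imp (Asgs (rs @ ps) (K (fst ` set ps) a)) (Asgs (rs @ ps) (K (fst ` set qs) a)))"
    using assms by (intro LEL_Asgs_mono lel_ax ax_mono) auto
  have "fst ` set rs \<inter> fst ` set ps = {}"
  proof -
    have "inj_on fst (set qs)"
      using assms(2) by (simp add: distinct_map)
    then show ?thesis
      using assms(3) by (fastforce simp: rs_def dest: inj_onD)
  qed
  then have "distinct (map fst (rs @ ps))"
    using assms(1,2) by (simp add: rs_def distinct_map_filter)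
  moreover have "set (rs @ ps) = set qs"
    using assms(3) by (auto simp: rs_def)
  ultimately have "LEL (Imp (Asgs (rs @ ps) (K (fst ` set qs) a)) (Asgs qs (K (fst ` set qs) a)))"
    using assms by (intro LEL_Asgs_perm) auto
  from LEL_imp_trans[OF LEL_imp_trans[OF vac grow] this] show ?thesis .
qed

lemma subst_Asgs_K:
  "x \<notin> fst ` set ps \<Longrightarrow>
   subst z x (Asgs ps (K Y a)) = Asgs ps (K (if x \<in> Y then insert z (Y - {x}) else Y) a)"
  by (induction ps) auto

lemma admissible_Asgs_K: "z \<notin> fst ` set ps \<Longrightarrow> admissible z x (Asgs ps (K Y a))"
  by (induction ps) auto

lemma LEL_Assign_rename:
  assumes "admissible z x f" and "z \<notin> FV (Assign x c f)" and "wf f"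
  shows "LEL (Imp (Assign x c f) (Assign z c (subst z x f)))"
proof -
  have "LEL (Assign z c (Imp (Assign x c f) (subst z x f)))"
    using assms by (intro lel_ax ax_subst) auto
  then have subst: "LEL (Imp (Assign z c (Assign x c f)) (Assign z c (subst z x f)))"
    using LEL_Asgs_distrib[of "[(z, c)]"] by simp
  have "LEL (Imp (Assign x c f) (Assign z c (Assign x c f)))"
    using assms by (intro lel_ax ax_vac) auto
  from LEL_imp_trans[OF this subst] show ?thesis .
qed

text \<open>The variables in \<open>S\<close> are known but not assigned; the induction moves the renamed
  variables there.\<close>

lemma LEL_Asgs_K_rename:
  assumes "map snd ps = map snd qs"
    and "distinct (map fst ps)" and "distinct (map fst qs)" and "fst ` set ps \<inter> fst ` set qs = {}"
    and "S \<inter> (fst ` set ps \<union> fst ` set qs) = {}" and "finite S"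
    and "wf a" and "FV a = {}"
  shows "LEL (Imp (Asgs ps (K (S \<union> fst ` set ps) a)) (Asgs qs (K (S \<union> fst ` set qs) a)))"
  using assms(1-6)
proof (induction ps arbitrary: qs S)
  case Nil
  then show ?case
    using assms(7,8) by (intro LEL_tautology) auto
next
  case (Cons p ps)
  obtain x c where p: "p = (x, c)"
    by force
  obtain z qs' where qs: "qs = (z, c) # qs'"
    using Cons.prems(1) p by (cases qs) auto
  let ?\<psi> = "Asgs ps (K (insert x (S \<union> fst ` set ps)) a)"
  have subst: "subst z x ?\<psi> = Asgs ps (K (insert z (S \<union> fst ` set ps)) a)"
    using Cons.prems p qs
    by (subst subst_Asgs_K) (auto intro!: arg_cong[where f = "\<lambda>Y. Asgs ps (K Y a)"])
  have rename: "LEL (Imp (Assign x c ?\<psi>) (Assign z c (subst z x ?\<psi>)))"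
    using Cons.prems p qs assms(7,8) by (intro LEL_Assign_rename admissible_Asgs_K) auto
  have "LEL (Imp (Asgs ps (K (insert z S \<union> fst ` set ps) a)) (Asgs qs' (K (insert z S \<union> fst ` set qs') a)))"
    by (rule Cons.IH) (use Cons.prems p qs in auto)
  from LEL_imp_trans[OF rename[unfolded subst] LEL_Asgs_mono[OF this, of "[(z, c)]", simplified]]
  show ?case
    by (simp add: p qs)
qed

lemma obtain_inj_avoiding:
  assumes "infinite (UNIV :: 'x set)" and "finite F"
  obtains g :: "'a::finite \<Rightarrow> 'x" where "inj g" and "range g \<inter> F = {}"
proof -
  have "infinite (UNIV - F)"
    using assms by (simp add: Diff_infinite_finite)
  then obtain S where S: "S \<subseteq> UNIV - F" "finite S" "card S = card (UNIV :: 'a set)"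
    by (meson infinite_arbitrarily_large)
  then obtain g :: "'a \<Rightarrow> 'x" where "bij_betw g UNIV S"
    by (metis finite_UNIV finite_same_card_bij)
  with S show ?thesis
    by (intro that) (auto simp: bij_betw_def)
qed

lemma LEL_Asgs_K_mono_agents:
  fixes ps qs :: "('x \<times> 'a::finite) list"
  assumes "infinite (UNIV :: 'x set)"
    and "distinct (map fst ps)" and "distinct (map snd ps)"
    and "distinct (map fst qs)" and "distinct (map snd qs)"
    and "snd ` set ps \<subseteq> snd ` set qs" and "wf a" and "FV a = {}"
  shows "LEL (Imp (Asgs ps (K (fst ` set ps) a)) (Asgs qs (K (fst ` set qs) a)))"
proof -
  obtain g :: "'a \<Rightarrow> 'x" where g: "inj g" "range g \<inter> (fst ` set ps \<union> fst ` set qs) = {}"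
    using obtain_inj_avoiding[OF assms(1), of "fst ` set ps \<union> fst ` set qs"] by auto
  \<comment> \<open>Rename both groups apart to the variables \<open>g c\<close>; then the first is a sublist
    of the second.\<close>
  define fresh where "fresh rs = map (\<lambda>c. (g c, c)) (map snd rs)" for rs :: "('x \<times> 'a) list"
  have fresh: "map snd (fresh rs) = map snd rs"
    "distinct (map snd rs) \<Longrightarrow> distinct (map fst (fresh rs))"
    for rs
    using g(1) by (auto simp: fresh_def distinct_map o_def inj_on_def)
  have "fst ` set (fresh rs) \<subseteq> range g" for rs
    by (auto simp: fresh_def)
  then have fresh_disjoint: "fst ` set ps \<inter> fst ` set (fresh rs) = {}"
    "fst ` set (fresh rs) \<inter> fst ` set qs = {}" for rs
    using g(2) by blast+
  have "LEL (Imp (Asgs ps (K ({} \<union> fst ` set ps) a)) (Asgs (fresh ps) (K ({} \<union> fst ` set (fresh ps)) a)))"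
    using assms fresh fresh_disjoint by (intro LEL_Asgs_K_rename) auto
  then have to_fresh: "LEL (Imp (Asgs ps (K (fst ` set ps) a)) (Asgs (fresh ps) (K (fst ` set (fresh ps)) a)))"
    by simp
  have "LEL (Imp (Asgs (fresh qs) (K ({} \<union> fst ` set (fresh qs)) a)) (Asgs qs (K ({} \<union> fst ` set qs) a)))"
    using assms fresh fresh_disjoint by (intro LEL_Asgs_K_rename) auto
  then have from_fresh: "LEL (Imp (Asgs (fresh qs) (K (fst ` set (fresh qs)) a)) (Asgs qs (K (fst ` set qs) a)))"
    by simp
  have "set (fresh ps) \<subseteq> set (fresh qs)"
    using assms(6) unfolding fresh_def set_map by (rule image_mono)
  then have "LEL (Imp (Asgs (fresh ps) (K (fst ` set (fresh ps)) a)) (Asgs (fresh qs) (K (fst ` set (fresh qs)) a)))"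
    using assms fresh by (intro LEL_Asgs_K_subset) auto
  from LEL_imp_trans[OF LEL_imp_trans[OF to_fresh this] from_fresh] show ?thesis .
qed

lemma LEL_K_nec:
  assumes "LEL a" and "FV a = {}" and "finite X"
  shows "LEL (K X a)"
proof -
  have "LEL (K {} a)"
    using assms by (intro lel_nec)
  moreover have "LEL (Imp (K {} a) (K X a))"
    using assms LEL_wf[OF assms(1)] by (intro lel_ax ax_mono) auto
  ultimately show ?thesis
    by (rule lel_mp)
qed

lemma LEL_K_mono2:
  assumes "LEL (Imp a (Imp b c))" and "FV a = {}" and "FV b = {}" and "FV c = {}" and "finite X"
  shows "LEL (Imp (K X a) (Imp (K X b) (K X c)))"
proof -
  have wf: "wf a" "wf b" "wf c"
    using LEL_wf[OF assms(1)] by auto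
  have "LEL (K X (Imp a (Imp b c)))"
    using assms by (intro LEL_K_nec) auto
  moreover have "LEL (Imp (K X (Imp a (Imp b c))) (Imp (K X a) (K X (Imp b c))))"
    using assms wf by (intro lel_ax ax_KK) auto
  moreover have "LEL (Imp (K X (Imp b c)) (Imp (K X b) (K X c)))"
    using assms wf by (intro lel_ax ax_KK) auto
  ultimately show ?thesis
    by (rule LEL_consequence3) (use assms wf in auto)
qed

lemma LEL_K_mono:
  assumes "LEL (Imp a b)" and "FV a = {}" and "FV b = {}" and "finite X"
  shows "LEL (Imp (K X a) (K X b))"
proof -
  have "LEL (Imp a (Imp a b))"
    using assms(1) by (rule LEL_consequence1) (use LEL_wf[OF assms(1)] in auto)
  then have twice: "LEL (Imp (K X a) (Imp (K X a) (K X b)))"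
    using assms by (intro LEL_K_mono2) auto
  then show ?thesis
    by (rule LEL_consequence1) (use LEL_wf[OF twice] in auto)
qed

lemma LEL_Asgs_K_closure:
  assumes "\<And>g. g \<in> set gs \<Longrightarrow> LEL (Imp h (Asgs ps (K X g)))"
    and "LEL (Imp (Conj gs) c)"
    and "\<And>g. g \<in> set gs \<Longrightarrow> FV g = {}" and "FV c = {}" and "finite X" and "wf h"
  shows "LEL (Imp h (Asgs ps (K X c)))"
  using assms(1-4)
proof (induction gs arbitrary: c)
  case Nil
  have "LEL c"
    using lel_mp[OF LEL_tautology Nil.prems(2)] by simp
  then have known: "LEL (Asgs ps (K X c))"
    using Nil.prems(4) assms(5) by (intro LEL_Asgs_nec LEL_K_nec)
  then show ?case
    by (rule LEL_consequence1) (use assms(6) LEL_wf[OF known] in auto)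
next
  case (Cons g gs)
  have wf: "wf g" "wf c"
    using LEL_wf[OF Cons.prems(2)] by auto
  have "LEL (Imp (Conj gs) (Imp g c))"
    using Cons.prems(2) by (rule LEL_consequence1) (use LEL_wf[OF Cons.prems(2)] in auto)
  then have "LEL (Imp h (Asgs ps (K X (Imp g c))))"
    by (rule Cons.IH[rotated]) (use Cons.prems in auto)
  moreover have "LEL (Imp h (Asgs ps (K X g)))"
    using Cons.prems(1) by simp
  moreover have "LEL (Imp (Imp g c) (Imp g c))"
    using wf by (intro LEL_tautology) auto
  then have "LEL (Imp (Asgs ps (K X (Imp g c))) (Imp (Asgs ps (K X g)) (Asgs ps (K X c))))"
    using Cons.prems(3,4) assms(5) by (intro LEL_Asgs_mono2 LEL_K_mono2) auto
  ultimately show ?case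
    by (rule LEL_consequence3) (use assms(5,6) Cons.prems(4) wf in auto)
qed

lemma LEL_Asgs_axiom_5:
  assumes "wf a" and "FV a = {}"
  shows "LEL (Asgs ps (Imp (Neg (K (fst ` set ps) a))
                           (K (fst ` set ps) (Asgs ps (Neg (K (fst ` set ps) a))))))"
  using lel_ax[OF ax_5[of "map fst ps" "map snd ps" a]] assms by (simp add: Assigns_eq_Asgs zip_map_fst_snd)

lemma LEL_Asgs_K_positive_introspection:
  assumes "wf a" and "FV a = {}"
  shows "LEL (Imp (Asgs ps (K (fst ` set ps) a))
                  (Asgs ps (K (fst ` set ps) (Asgs ps (K (fst ` set ps) a)))))"
proof -
  define X where "X = fst ` set ps"
  define \<kappa> where "\<kappa> = K X a"
  define s where "s = Asgs ps (Neg \<kappa>)"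
  define \<beta> where "\<beta> = Asgs ps \<kappa>"
  define q where "q = Asgs ps (Neg (K X s))"
  have fin: "finite X"
    by (simp add: X_def)
  have wf: "wf s" "FV s = {}" "wf \<beta>" "FV \<beta> = {}" "wf q" "FV q = {}" "wf \<kappa>"
    using assms by (auto simp: s_def \<kappa>_def \<beta>_def q_def X_def)
  have five_a: "LEL (Asgs ps (Imp (Neg \<kappa>) (K X s)))"
    using LEL_Asgs_axiom_5[OF assms, of ps] by (simp add: s_def \<kappa>_def X_def)
  have five_s: "LEL (Asgs ps (Imp (Neg (K X s)) (K X q)))"
    using LEL_Asgs_axiom_5[OF wf(1,2), of ps] by (simp add: q_def X_def)
  have "LEL (Asgs ps (Imp (Neg (K X s)) \<kappa>))"
    by (rule LEL_Asgs_consequence2[OF five_a five_a]) (use wf fin in auto)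
  then have "LEL (Imp q \<beta>)"
    unfolding q_def \<beta>_def by (rule LEL_Asgs_distrib)
  then have K_q_\<beta>: "LEL (Asgs ps (Imp (K X q) (K X \<beta>)))"
    using wf fin by (intro LEL_Asgs_nec LEL_K_mono) auto
  \<comment> \<open>\<open>s\<close> is a sentence, so it is preserved by the assignments, while under them
    \<open>\<kappa>\<close> refutes it.\<close>
  have "LEL (Imp (Neg \<kappa>) (Imp \<kappa> (Neg s)))" "LEL (Imp (Neg s) (Imp \<kappa> (Neg s)))"
    using wf by (auto intro!: LEL_tautology)
  then have "LEL (Imp s (Asgs ps (Imp \<kappa> (Neg s))))"
    and "LEL (Imp (Neg s) (Asgs ps (Imp \<kappa> (Neg s))))"
    using LEL_Asgs_vacuous[of "Neg s" ps] wf
    by (auto simp: s_def[symmetric] intro: LEL_imp_trans dest: LEL_Asgs_mono[of _ _ ps])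
  then have \<kappa>_not_s: "LEL (Asgs ps (Imp \<kappa> (Neg s)))"
    by (rule LEL_consequence2) (use wf in auto)
  have T: "LEL (Asgs ps (Imp (K X s) s))"
    using wf fin by (intro LEL_Asgs_nec lel_ax ax_T) auto
  have "LEL (Asgs ps (Imp \<kappa> (Neg (K X s))))"
    by (rule LEL_Asgs_consequence2[OF \<kappa>_not_s T]) (use wf fin in auto)
  then have "LEL (Asgs ps (Imp \<kappa> (K X q)))"
    by (rule LEL_Asgs_consequence2[OF _ five_s]) (use wf fin in auto)
  then have "LEL (Asgs ps (Imp \<kappa> (K X \<beta>)))"
    by (rule LEL_Asgs_consequence2[OF _ K_q_\<beta>]) (use wf fin in auto)
  then show ?thesis
    unfolding \<beta>_def \<kappa>_def X_def by (rule LEL_Asgs_distrib)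
qed

lemma LEL_Assign_imp_knows_Dia:
  assumes "wf f" and "FV f \<subseteq> {x}"
    and "LEL (Assign x c (Imp f (K {x} (Assign x c f))))"
  shows "LEL (Imp (Assign x c f) (Assign y c (K {y} (Dia x c f))))"
proof -
  have knows: "LEL (Imp (Assign x c f) (Asgs [(x, c)] (K {x} (Dia x c f))))"
  proof (rule LEL_Asgs_K_closure[where gs = "[Assign x c f, Dia x c Top]"])
    have "LEL (Imp (Assign x c f) (Assign x c (K {x} (Assign x c f))))"
      using LEL_Asgs_distrib[of "[(x, c)]"] assms(3) by simp
    moreover have "LEL (Imp (Assign x c f) (Assign x c (K {x} (Dia x c Top))))"
      using lel_ax[OF ax_exist, of x c] assms(1) by (auto intro: LEL_consequence1)
    ultimately show "g \<in> set [Assign x c f, Dia x c Top] \<Longrightarrow>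
      LEL (Imp (Assign x c f) (Asgs [(x, c)] (K {x} g)))" for g
      by auto
    have "LEL (Imp f (Imp (Neg f) (Neg Top)))"
      using assms(1) by (intro LEL_tautology) auto
    from LEL_Asgs_mono2[OF this, of "[(x, c)]"]
    have "LEL (Imp (Assign x c f) (Imp (Assign x c (Neg f)) (Assign x c (Neg Top))))"
      by simp
    then show "LEL (Imp (Conj [Assign x c f, Dia x c Top]) (Dia x c f))"
      by (rule LEL_consequence1) (use assms(1) in auto)
  qed (use assms in auto)
  have "LEL (Imp (Assign x c (K {x} (Dia x c f))) (Assign y c (subst y x (K {x} (Dia x c f)))))"
    using assms by (intro LEL_Assign_rename) auto
  from LEL_imp_trans[OF knows[simplified] this] show ?thesis
    by simp
qed

definition group_knows ::
  "('a set \<Rightarrow> 'a list) \<Rightarrow> ('a set \<Rightarrow> 'x list) \<Rightarrow> 'a set \<Rightarrow> ('p, 'x, 'a) fm \<Rightarrow> ('p, 'x, 'a) fm" where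
  "group_knows enum vars B a = Assigns (vars B) (enum B) (K (set (vars B)) a)"

definition Dia_all ::
  "('a set \<Rightarrow> 'a list) \<Rightarrow> 'x \<Rightarrow> ('p, 'x, 'a) fm \<Rightarrow> 'a set \<Rightarrow> ('p, 'x, 'a) fm list" where
  "Dia_all enum x f B = map (\<lambda>c. Dia x c f) (enum B)"

lemma Kphi_eq:
  "Kphi Bs enum vars x f a = Conj (map (\<lambda>B. Imp (bang enum x f B) (group_knows enum vars B a)) Bs)"
  by (simp add: Kphi_def group_knows_def)

lemma valid_choice_zip:
  assumes "valid_choice Bs enum vars"
  shows "distinct (map fst (zip (vars B) (enum B)))" and "distinct (map snd (zip (vars B) (enum B)))"
    and "fst ` set (zip (vars B) (enum B)) = set (vars B)" and "snd ` set (zip (vars B) (enum B)) = B"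
proof -
  have "length (vars B) = length (enum B)" "distinct (vars B)" "distinct (enum B)" "set (enum B) = B"
    using assms by (auto simp: valid_choice_def)
  then show "distinct (map fst (zip (vars B) (enum B)))" "distinct (map snd (zip (vars B) (enum B)))"
    "fst ` set (zip (vars B) (enum B)) = set (vars B)" "snd ` set (zip (vars B) (enum B)) = B"
    by (simp_all add: image_set)
qed

lemma group_knows_eq_Asgs:
  assumes "valid_choice Bs enum vars"
  shows "group_knows enum vars B a =
    Asgs (zip (vars B) (enum B)) (K (fst ` set (zip (vars B) (enum B))) a)"
  using valid_choice_zip(3)[OF assms] by (simp add: group_knows_def Assigns_eq_Asgs)

lemma wf_group_knows [simp]: "wf (group_knows enum vars B a) = (wf a \<and> FV a = {})"
  by (simp add: group_knows_def Assigns_eq_Asgs)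

lemma FV_group_knows:
  "valid_choice Bs enum vars \<Longrightarrow> FV (group_knows enum vars B a) = {}"
  by (simp add: group_knows_eq_Asgs valid_choice_zip(3))

lemma wf_bang [simp]: "wf f \<Longrightarrow> wf (bang enum x f B)"
  by (simp add: bang_def)

lemma FV_bang: "FV f \<subseteq> {x} \<Longrightarrow> FV (bang enum x f B) = {}"
  by (auto simp: bang_def)

lemma wf_Kphi: "wf f \<Longrightarrow> wf a \<Longrightarrow> FV a = {} \<Longrightarrow> wf (Kphi Bs enum vars x f a)"
  by (simp add: Kphi_eq)

lemma FV_Kphi:
  "valid_choice Bs enum vars \<Longrightarrow> FV f \<subseteq> {x} \<Longrightarrow> FV (Kphi Bs enum vars x f a) = {}"
  by (simp add: Kphi_eq FV_bang FV_group_knows)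

lemma group_knows_mono:
  assumes "infinite (UNIV :: 'x set)" and "valid_choice Bs enum vars" and "B \<subseteq> B'"
    and "wf a" and "FV a = {}"
  shows "LEL (Imp (group_knows enum vars B a) (group_knows enum vars B' (a :: ('p, 'x, 'a::finite) fm)))"
  unfolding group_knows_eq_Asgs[OF assms(2)]
  using assms valid_choice_zip[OF assms(2)] by (intro LEL_Asgs_K_mono_agents) auto

lemma group_knows_positive_introspection:
  assumes "valid_choice Bs enum vars" and "wf a" and "FV a = {}"
  shows "LEL (Imp (group_knows enum vars B a) (group_knows enum vars B (group_knows enum vars B a)))"
  unfolding group_knows_eq_Asgs[OF assms(1)]
  using assms(2,3) by (rule LEL_Asgs_K_positive_introspection)

lemma group_knows_closure:
  assumes "valid_choice Bs enum vars"
    and "\<And>g. g \<in> set gs \<Longrightarrow> LEL (Imp h (group_knows enum vars B g))"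
    and "LEL (Imp (Conj gs) c)"
    and "\<And>g. g \<in> set gs \<Longrightarrow> FV g = {}" and "FV c = {}" and "wf h"
  shows "LEL (Imp h (group_knows enum vars B c))"
  using assms(2) unfolding group_knows_eq_Asgs[OF assms(1)]
  by (rule LEL_Asgs_K_closure) (use assms valid_choice_zip(3)[OF assms(1)] in auto)

lemma bang_imp_group_knows_Dia:
  assumes "valid_choice Bs enum vars" and "wf f" and "FV f \<subseteq> {x}"
    and "\<forall>c. LEL (Assign x c (Imp f (K {x} (Assign x c f))))"
    and "g \<in> set (Dia_all enum x f B)"
  shows "LEL (Imp (bang enum x f B) (group_knows enum vars B g))"
proof -
  obtain c where c: "c \<in> set (enum B)" and g: "g = Dia x c f"
    using assms(5) by (auto simp: Dia_all_def)
  then obtain y where y: "(y, c) \<in> set (zip (vars B) (enum B))"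
    using assms(1) by (metis in_set_impl_in_set_zip2 valid_choice_def)
  have bang_Dia: "LEL (Imp (bang enum x f B) (Dia x c f))"
    using c assms(2) by (intro LEL_tautology) (auto simp: bang_def)
  have Dia_Assign: "LEL (Imp (Dia x c f) (Assign x c f))"
    using assms(2) by (intro lel_ax ax_func) auto
  have Assign_knows: "LEL (Imp (Assign x c f) (Assign y c (K {y} (Dia x c f))))"
    using assms(2-4) by (intro LEL_Assign_imp_knows_Dia) auto
  have "LEL (Imp (Asgs [(y, c)] (K (fst ` set [(y, c)]) (Dia x c f))) (group_knows enum vars B (Dia x c f)))"
    unfolding group_knows_eq_Asgs[OF assms(1)]
    using y valid_choice_zip[OF assms(1)] assms(2,3) by (intro LEL_Asgs_K_subset) auto
  from LEL_imp_trans[OF LEL_imp_trans[OF LEL_imp_trans[OF bang_Dia Dia_Assign] Assign_knows] this[simplified]]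
  show ?thesis
    unfolding g .
qed

lemma group_knows_and_Dia_all_imp_Kphi:
  fixes f :: "('p, 'x, 'a::finite) fm"
  assumes "infinite (UNIV :: 'x set)" and "valid_choice Bs enum vars"
    and "wf f" and "FV f \<subseteq> {x}" and "wf a" and "FV a = {}"
  shows "LEL (Imp (Conj (group_knows enum vars B a # Dia_all enum x f B)) (Kphi Bs enum vars x f a))"
  unfolding Kphi_eq
proof (rule LEL_imp_Conj)
  fix g
  assume "g \<in> set (map (\<lambda>B. Imp (bang enum x f B) (group_knows enum vars B a)) Bs)"
  then obtain B' where g: "g = Imp (bang enum x f B') (group_knows enum vars B' a)"
    by auto
  show "LEL (Imp (Conj (group_knows enum vars B a # Dia_all enum x f B)) g)"
  proof (cases "B \<subseteq> B'")
    case True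
    with assms have "LEL (Imp (group_knows enum vars B a) (group_knows enum vars B' a))"
      by (intro group_knows_mono) auto
    then show ?thesis
      unfolding g by (rule LEL_consequence1) (use assms in \<open>auto simp: Dia_all_def\<close>)
  next
    case False
    then obtain c where "c \<in> B" and "c \<notin> B'"
      by auto
    \<comment> \<open>\<open>\<langle>x:=c\<rangle>\<phi>\<close> is a conjunct of the premise and \<open>[x:=c]\<not>\<phi>\<close> one of
      \<open>\<phi>!(B')\<close>\<close>
    then have "c \<in> set (enum B)" and "c \<in> set (enum (UNIV - B'))"
      using assms(2) by (auto simp: valid_choice_def)
    then show ?thesis
      unfolding g using assms by (intro LEL_tautology) (auto simp: Dia_all_def bang_def)
  qed
qed (use assms in \<open>auto simp: Dia_all_def\<close>)

lemma Kphi_imp_bang_imp_group_knows_Kphi: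
  fixes f :: "('p, 'x, 'a::finite) fm"
  assumes "infinite (UNIV :: 'x set)"
    and "wf f" and "FV f \<subseteq> {x}"
    and "\<forall>c. LEL (Assign x c (Imp f (K {x} (Assign x c f))))"
    and "valid_choice Bs enum vars"
    and "wf a" and "FV a = {}" and "B \<in> set Bs"
  shows "LEL (Imp (Kphi Bs enum vars x f a)
                  (Imp (bang enum x f B) (group_knows enum vars B (Kphi Bs enum vars x f a))))"
proof -
  let ?\<kappa> = "Kphi Bs enum vars x f a" and ?\<beta> = "group_knows enum vars B a"
  have wf: "wf ?\<kappa>" "FV ?\<kappa> = {}" "FV ?\<beta> = {}"
    using assms by (auto simp: wf_Kphi FV_Kphi FV_group_knows)
  have "LEL (Imp (And ?\<kappa> (bang enum x f B)) (group_knows enum vars B ?\<kappa>))"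
  proof (rule group_knows_closure[OF assms(5), where gs = "?\<beta> # Dia_all enum x f B"])
    fix g
    assume "g \<in> set (?\<beta> # Dia_all enum x f B)"
    then consider "g = ?\<beta>" | "g \<in> set (Dia_all enum x f B)"
      by auto
    then show "LEL (Imp (And ?\<kappa> (bang enum x f B)) (group_knows enum vars B g))"
    proof cases
      case 1
      have "LEL (Imp (And ?\<kappa> (bang enum x f B)) ?\<beta>)"
        using assms by (intro LEL_tautology) (auto simp: Kphi_eq wf_Kphi)
      from LEL_imp_trans[OF this group_knows_positive_introspection[OF assms(5-7)]] show ?thesis
        unfolding 1 .
    next
      case 2
      with assms have "LEL (Imp (bang enum x f B) (group_knows enum vars B g))"
        by (intro bang_imp_group_knows_Dia) auto
      then show ?thesis
        by (rule LEL_consequence1) (use assms wf 2 in \<open>auto simp: Dia_all_def\<close>)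
    qed
  next
    show "LEL (Imp (Conj (?\<beta> # Dia_all enum x f B)) ?\<kappa>)"
      using assms by (intro group_knows_and_Dia_all_imp_Kphi) auto
  qed (use assms wf in \<open>auto simp: Dia_all_def\<close>)
  then show ?thesis
    by (rule LEL_consequence1) (use assms wf in auto)
qed

theorem lemma1:
  fixes f :: "('p::countable, 'x::countable, 'a::finite) fm" and x :: 'x
    and Bs :: "'a set list" and enum :: "'a set \<Rightarrow> 'a list" and vars :: "'a set \<Rightarrow> 'x list"
  assumes "infinite (UNIV :: 'x set)"
    and "wf f" and "FV f \<subseteq> {x}"
    and "\<forall>c. LEL (Assign x c (Imp f (K {x} (Assign x c f))))"
    and "valid_choice Bs enum vars"
  shows "\<forall>a. wf a \<and> FV a = {} \<longrightarrow>
           LEL (Imp (Kphi Bs enum vars x f a) (Kphi Bs enum vars x f (Kphi Bs enum vars x f a)))"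
proof (intro allI impI)
  fix a :: "('p, 'x, 'a) fm"
  assume a: "wf a \<and> FV a = {}"
  then have "LEL (Imp (Kphi Bs enum vars x f a)
                      (Imp (bang enum x f B) (group_knows enum vars B (Kphi Bs enum vars x f a))))"
    if "B \<in> set Bs" for B
    using Kphi_imp_bang_imp_group_knows_Kphi[OF assms] that by auto
  then show "LEL (Imp (Kphi Bs enum vars x f a) (Kphi Bs enum vars x f (Kphi Bs enum vars x f a)))"
    unfolding Kphi_eq[of Bs enum vars x f "Kphi Bs enum vars x f a"]
    by (intro LEL_imp_Conj) (use a assms in \<open>auto simp: wf_Kphi\<close>)
qed

end
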